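(* Let $f:\mathbb R^n\to\mathbb R$ be an SOS-convex polynomial. Assume $f=s+p$, where $s=\sum_{j=1}^n u_j$ for convex univariate polynomials $u_j$ in $x_j$ of degree at most $2d_j$, $j=1,\dots,n$, and $p$ is an SOS-convex polynomial on $\mathbb R^n$ of degree at most $2r$. If $f(\mathbf x)\ge0$ for all $\mathbf x\in\mathbb R^n$, then there exist $\sigma\in\Sigma[\mathbf x]_r$ and $\sigma_j\in\Sigma[x_j]_{d_j}$, $j=1,\dots,n$, such that $f=\sigma+\sum_{j=1}^n\sigma_j$.
   Context: A polynomial $f$ on $\mathbb R^n$ is SOS-convex if its Hessian $\nabla^2 f(\mathbf x)$ is an SOS matrix polynomial, i.e., $\nabla^2 f(\mathbf x)=F(\mathbf x)^TF(\mathbf x)$ for some matrix polynomial $F$ with $n$ columns; equivalently $f(\mathbf x)-f(\mathbf y)-\langle\nabla f(\mathbf y),\mathbf x-\mathbf y\rangle$ is a sum of squares in $(\mathbf x,\mathbf y)$. $\Sigma[\mathbf x]_r$ denotes the set of sums of squares of polynomials in $\mathbf x$ of degree at most $2r$, and $\Sigma[x_j]_{d_j}$ the set of sums of squares of univariate polynomials in $x_j$ of degree at most $2d_j$. *)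

theory Defs
  imports "HOL-Analysis.Analysis" "HOL-Computational_Algebra.Polynomial"
begin

definition monom_val :: "real ^ 'i \<Rightarrow> ('i::finite \<Rightarrow> nat) \<Rightarrow> real" where
  "monom_val x \<alpha> = (\<Prod>i\<in>UNIV. (x $ i) ^ (\<alpha> i))"

definition mpoly_deg_le :: "nat \<Rightarrow> (real ^ 'i::finite \<Rightarrow> real) \<Rightarrow> bool" where
  "mpoly_deg_le k f \<longleftrightarrow> (\<exists>c :: ('i \<Rightarrow> nat) \<Rightarrow> real.
      f = (\<lambda>x. \<Sum>\<alpha>\<in>{\<alpha>. sum \<alpha> UNIV \<le> k}. c \<alpha> * monom_val x \<alpha>))"

definition mpoly :: "(real ^ 'i::finite \<Rightarrow> real) \<Rightarrow> bool" where
  "mpoly f \<longleftrightarrow> (\<exists>k. mpoly_deg_le k f)"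

definition sos_le :: "nat \<Rightarrow> (real ^ 'i::finite \<Rightarrow> real) \<Rightarrow> bool" where
  "sos_le r f \<longleftrightarrow> (\<exists>qs. (\<forall>q\<in>set qs. mpoly_deg_le r q) \<and>
      f = (\<lambda>x. \<Sum>q\<leftarrow>qs. (q x)\<^sup>2))"

definition sos :: "(real ^ 'i::finite \<Rightarrow> real) \<Rightarrow> bool" where
  "sos f \<longleftrightarrow> (\<exists>r. sos_le r f)"

definition join_vec :: "real ^ 'i \<Rightarrow> real ^ 'i \<Rightarrow> real ^ ('i + 'i)" where
  "join_vec x y = (\<chi> k. case k of Inl a \<Rightarrow> x $ a | Inr b \<Rightarrow> y $ b)"

definition sos_convex :: "(real ^ 'i::finite \<Rightarrow> real) \<Rightarrow> bool" where
  "sos_convex f \<longleftrightarrow> mpoly f \<and> (\<exists>g :: real ^ 'i \<Rightarrow> real ^ 'i.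
      (\<forall>y. (f has_derivative (\<lambda>h. g y \<bullet> h)) (at y)) \<and>
      (\<exists>F :: real ^ ('i + 'i) \<Rightarrow> real. sos F \<and>
         (\<forall>x y. F (join_vec x y) = f x - f y - g y \<bullet> (x - y))))"

definition uni_sos_le :: "nat \<Rightarrow> real poly \<Rightarrow> bool" where
  "uni_sos_le d p \<longleftrightarrow> (\<exists>qs. (\<forall>q\<in>set qs. degree q \<le> d) \<and> p = (\<Sum>q\<leftarrow>qs. q ^ 2))"

end

theory Submission
  imports Defs "HOL-Computational_Algebra.Fundamental_Theorem_Algebra"
begin

(* A convex polynomial that is bounded below attains its minimum, say at y. There the
   gradients of the separable part and of p cancel, so f is f(y) plus the first-order Taylor
   remainders at y of the u j and of p. Each remainder of a u j is a nonnegative univariate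
   polynomial of degree at most 2 d j, hence a sum of squares of polynomials of degree at most
   d j. The remainder of p is a sum of squares by SOS-convexity; together with f(y) it has
   degree at most 2r + 1 along every ray from the origin, and since leading terms of squares
   cannot cancel, every polynomial squared in it has degree at most r. *)

lemma finite_multidegrees_le: "finite {\<alpha>::'i::finite \<Rightarrow> nat. sum \<alpha> UNIV \<le> k}"
proof (rule finite_subset)
  show "{\<alpha>::'i \<Rightarrow> nat. sum \<alpha> UNIV \<le> k} \<subseteq> (\<Pi>\<^sub>E i\<in>UNIV. {..k})"
    by (auto intro: order_trans[OF member_le_sum[of _ UNIV]])
  show "finite (\<Pi>\<^sub>E i\<in>(UNIV::'i set). {..k})"
    by (rule finite_PiE) auto
qed

lemma sum_multidegrees_le_by_degree:
  fixes g :: "('i::finite \<Rightarrow> nat) \<Rightarrow> 'a::comm_monoid_add"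
  shows "(\<Sum>\<alpha>\<in>{\<alpha>. sum \<alpha> UNIV \<le> k}. g \<alpha>) = (\<Sum>m\<le>k. \<Sum>\<alpha>\<in>{\<alpha>. sum \<alpha> UNIV = m}. g \<alpha>)"
proof -
  have "(\<Sum>m\<le>k. \<Sum>\<alpha>\<in>{\<alpha>. sum \<alpha> UNIV = m}. g \<alpha>)
      = (\<Sum>m\<le>k. \<Sum>\<alpha>\<in>{\<alpha>\<in>{\<alpha>. sum \<alpha> UNIV \<le> k}. sum \<alpha> UNIV = m}. g \<alpha>)"
    by (intro sum.cong refl) auto
  also have "\<dots> = (\<Sum>\<alpha>\<in>{\<alpha>. sum \<alpha> UNIV \<le> k}. g \<alpha>)"
    by (rule sum.group) (auto simp: finite_multidegrees_le)
  finally show ?thesis by simp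
qed

lemma mpoly_deg_le_monom_sum:
  fixes a :: "'b \<Rightarrow> real" and \<beta> :: "'b \<Rightarrow> 'i::finite \<Rightarrow> nat"
  assumes "finite A" and "\<And>b. b \<in> A \<Longrightarrow> sum (\<beta> b) UNIV \<le> k"
  shows "mpoly_deg_le k (\<lambda>x::real ^ 'i. \<Sum>b\<in>A. a b * monom_val x (\<beta> b))"
proof -
  define c where "c \<gamma> = (\<Sum>b\<in>{b\<in>A. \<beta> b = \<gamma>}. a b)" for \<gamma>
  have "(\<Sum>\<gamma>\<in>{\<alpha>. sum \<alpha> UNIV \<le> k}. c \<gamma> * monom_val x \<gamma>) = (\<Sum>b\<in>A. a b * monom_val x (\<beta> b))"
    for x
  proof -
    have "(\<Sum>\<gamma>\<in>{\<alpha>. sum \<alpha> UNIV \<le> k}. c \<gamma> * monom_val x \<gamma>)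
       = (\<Sum>\<gamma>\<in>{\<alpha>. sum \<alpha> UNIV \<le> k}. \<Sum>b\<in>{b\<in>A. \<beta> b = \<gamma>}. a b * monom_val x (\<beta> b))"
      unfolding c_def sum_distrib_right by (intro sum.cong refl) auto
    also have "\<dots> = (\<Sum>b\<in>A. a b * monom_val x (\<beta> b))"
      by (rule sum.group) (use assms finite_multidegrees_le in auto)
    finally show ?thesis .
  qed
  then show ?thesis unfolding mpoly_deg_le_def by (intro exI[of _ c]) auto
qed

lemma mpoly_deg_le_const: "mpoly_deg_le k (\<lambda>x::real ^ 'i::finite. c)"
proof -
  have "mpoly_deg_le k (\<lambda>x::real ^ 'i. \<Sum>b\<in>{()}. c * monom_val x (\<lambda>i. 0))"
    by (rule mpoly_deg_le_monom_sum) auto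
  then show ?thesis by (simp add: monom_val_def)
qed

lemma sum_UNIV_Plus:
  "sum g (UNIV :: ('a::finite + 'b::finite) set) = (\<Sum>i\<in>UNIV. g (Inl i)) + (\<Sum>i\<in>UNIV. g (Inr i))"
proof -
  have "sum g (UNIV :: ('a + 'b) set) = sum g (UNIV <+> UNIV)" by simp
  also have "\<dots> = (\<Sum>i\<in>UNIV. g (Inl i)) + (\<Sum>i\<in>UNIV. g (Inr i))"
    unfolding sum.Plus[OF finite finite] by (simp add: o_def)
  finally show ?thesis .
qed

lemma monom_val_join_vec:
  "monom_val (join_vec x y) \<alpha> = monom_val x (\<lambda>i. \<alpha> (Inl i)) * monom_val y (\<lambda>i. \<alpha> (Inr i))"
proof -
  have "monom_val (join_vec x y) \<alpha> = (\<Prod>k\<in>UNIV <+> UNIV. (join_vec x y $ k) ^ \<alpha> k)"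
    unfolding monom_val_def by simp
  also have "\<dots> = monom_val x (\<lambda>i. \<alpha> (Inl i)) * monom_val y (\<lambda>i. \<alpha> (Inr i))"
    unfolding prod.Plus[OF finite finite] monom_val_def by (simp add: join_vec_def o_def)
  finally show ?thesis .
qed

lemma mpoly_deg_le_join_vec_left:
  assumes "mpoly_deg_le k (q :: real ^ ('i::finite + 'i) \<Rightarrow> real)"
  shows "mpoly_deg_le k (\<lambda>x. q (join_vec x y))"
proof -
  obtain c where q: "q = (\<lambda>z. \<Sum>\<alpha>\<in>{\<alpha>. sum \<alpha> UNIV \<le> k}. c \<alpha> * monom_val z \<alpha>)"
    using assms unfolding mpoly_deg_le_def by blast
  have "mpoly_deg_le k (\<lambda>x::real ^ 'i. \<Sum>\<alpha>\<in>{\<alpha>::'i + 'i \<Rightarrow> nat. sum \<alpha> UNIV \<le> k}.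
           (c \<alpha> * monom_val y (\<lambda>i. \<alpha> (Inr i))) * monom_val x (\<lambda>i. \<alpha> (Inl i)))"
    by (rule mpoly_deg_le_monom_sum[OF finite_multidegrees_le]) (simp add: sum_UNIV_Plus)
  then show ?thesis unfolding q monom_val_join_vec by (simp add: mult_ac)
qed

lemma mpoly_deg_le_on_line:
  fixes q :: "real ^ 'i::finite \<Rightarrow> real"
  assumes "mpoly_deg_le k q"
  obtains P where "degree P \<le> k" and "\<And>t. q (x + t *\<^sub>R v) = poly P t"
proof -
  obtain c where q: "q = (\<lambda>z. \<Sum>\<alpha>\<in>{\<alpha>. sum \<alpha> UNIV \<le> k}. c \<alpha> * monom_val z \<alpha>)"
    using assms unfolding mpoly_deg_le_def by blast
  define P where "P = (\<Sum>\<alpha>\<in>{\<alpha>::'i \<Rightarrow> nat. sum \<alpha> UNIV \<le> k}.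
                         smult (c \<alpha>) (\<Prod>i\<in>UNIV. [:x $ i, v $ i:] ^ \<alpha> i))"
  have "q (x + t *\<^sub>R v) = poly P t" for t
    unfolding q P_def by (simp add: poly_sum poly_prod monom_val_def algebra_simps)
  moreover have "degree P \<le> k"
    unfolding P_def
  proof (rule degree_sum_le)
    fix \<alpha> :: "'i \<Rightarrow> nat" assume "\<alpha> \<in> {\<alpha>. sum \<alpha> UNIV \<le> k}"
    have "degree (\<Prod>i\<in>UNIV. [:x $ i, v $ i:] ^ \<alpha> i) \<le> (\<Sum>i\<in>UNIV. degree ([:x $ i, v $ i:] ^ \<alpha> i))"
      using degree_prod_sum_le[of UNIV "\<lambda>i. [:x $ i, v $ i:] ^ \<alpha> i"] by (simp add: o_def)
    also have "\<dots> \<le> sum \<alpha> UNIV"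
      by (intro sum_mono order_trans[OF degree_power_le]) simp
    finally show "degree (smult (c \<alpha>) (\<Prod>i\<in>UNIV. [:x $ i, v $ i:] ^ \<alpha> i)) \<le> k"
      using \<open>\<alpha> \<in> _\<close> degree_smult_le order_trans by fastforce
  qed (rule finite_multidegrees_le)
  ultimately show ?thesis using that by blast
qed

lemma monom_val_scaleR: "monom_val (t *\<^sub>R x) \<alpha> = t ^ sum \<alpha> UNIV * monom_val x \<alpha>"
  unfolding monom_val_def by (simp add: power_mult_distrib prod.distrib power_sum)

lemma sum_powers_eq_poly_imp_coeff:
  fixes a :: "nat \<Rightarrow> real"
  assumes "\<And>t. (\<Sum>m\<le>K. a m * t ^ m) = poly P t" and "m \<le> K"
  shows "a m = coeff P m"
proof -
  have "poly (\<Sum>m\<le>K. monom (a m) m) = poly P"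
    using assms(1) by (simp add: poly_sum poly_monom fun_eq_iff)
  then have "(\<Sum>m\<le>K. monom (a m) m) = P"
    by (simp add: poly_eq_poly_eq_iff)
  then show ?thesis
    using assms(2) by (auto simp: coeff_sum coeff_monom)
qed

definition ray_degree_le :: "nat \<Rightarrow> (real ^ 'i::finite \<Rightarrow> real) \<Rightarrow> bool" where
  "ray_degree_le k q \<longleftrightarrow> (\<forall>x. \<exists>P. degree P \<le> k \<and> (\<forall>t. q (t *\<^sub>R x) = poly P t))"

lemma ray_degree_le_if_mpoly_deg_le: "mpoly_deg_le k q \<Longrightarrow> ray_degree_le k q"
  unfolding ray_degree_le_def by (metis mpoly_deg_le_on_line[of k q 0] add_0)

lemma ray_degree_le_mono: "ray_degree_le k q \<Longrightarrow> k \<le> l \<Longrightarrow> ray_degree_le l q"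
  unfolding ray_degree_le_def by (meson order_trans)

lemma ray_degree_le_add:
  assumes "ray_degree_le k q" and "ray_degree_le k q'"
  shows "ray_degree_le k (\<lambda>x. q x + q' x)"
  unfolding ray_degree_le_def
proof
  fix x
  obtain P P' where "degree P \<le> k" "\<And>t. q (t *\<^sub>R x) = poly P t"
    and "degree P' \<le> k" "\<And>t. q' (t *\<^sub>R x) = poly P' t"
    using assms unfolding ray_degree_le_def by metis
  then show "\<exists>R. degree R \<le> k \<and> (\<forall>t. q (t *\<^sub>R x) + q' (t *\<^sub>R x) = poly R t)"
    by (intro exI[of _ "P + P'"]) (simp add: degree_add_le)
qed

lemma ray_degree_le_affine: "ray_degree_le 1 (\<lambda>x. c + g \<bullet> x)"
  unfolding ray_degree_le_def
proof
  fix x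
  show "\<exists>P. degree P \<le> 1 \<and> (\<forall>t. c + g \<bullet> (t *\<^sub>R x) = poly P t)"
    by (intro exI[of _ "[:c, g \<bullet> x:]"]) (simp add: mult.commute)
qed

lemma mpoly_deg_le_if_ray_degree_le:
  fixes q :: "real ^ 'i::finite \<Rightarrow> real"
  assumes "mpoly_deg_le K q" and "ray_degree_le r q"
  shows "mpoly_deg_le r q"
proof -
  obtain c where q: "q = (\<lambda>x. \<Sum>\<alpha>\<in>{\<alpha>. sum \<alpha> UNIV \<le> K}. c \<alpha> * monom_val x \<alpha>)"
    using assms(1) unfolding mpoly_deg_le_def by blast
  define c' where "c' \<alpha> = (if sum \<alpha> UNIV \<le> K then c \<alpha> else 0)" for \<alpha>
  define Q where "Q m x = (\<Sum>\<alpha>\<in>{\<alpha>::'i \<Rightarrow> nat. sum \<alpha> UNIV = m}. c' \<alpha> * monom_val x \<alpha>)" for m x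
  \<comment> \<open>the homogeneous part of degree m, read off as the coefficient of t ^ m in q (t x)\<close>
  have q_Q: "q x = (\<Sum>m\<le>K. Q m x)" for x
  proof -
    have "q x = (\<Sum>\<alpha>\<in>{\<alpha>. sum \<alpha> UNIV \<le> K}. c' \<alpha> * monom_val x \<alpha>)"
      unfolding q c'_def by (intro sum.cong) auto
    then show ?thesis unfolding Q_def by (simp add: sum_multidegrees_le_by_degree)
  qed
  have Q_homogeneous: "Q m (t *\<^sub>R x) = Q m x * t ^ m" for m t x
    unfolding Q_def monom_val_scaleR sum_distrib_right by (intro sum.cong refl) auto
  have Q_zero: "Q m x = 0" if "r < m \<or> K < m" for m x
  proof (cases "K < m")
    case True
    then show ?thesis unfolding Q_def c'_def by (intro sum.neutral) auto
  next
    case False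
    obtain P where P: "degree P \<le> r" "\<And>t. q (t *\<^sub>R x) = poly P t"
      using assms(2) unfolding ray_degree_le_def by blast
    have "Q m x = coeff P m"
      using False by (intro sum_powers_eq_poly_imp_coeff) (auto simp: P(2)[symmetric] q_Q Q_homogeneous)
    then show ?thesis using that False P(1) by (simp add: coeff_eq_0)
  qed
  have "q x = (\<Sum>\<alpha>\<in>{\<alpha>. sum \<alpha> UNIV \<le> r}. c' \<alpha> * monom_val x \<alpha>)" for x
  proof -
    have "q x = (\<Sum>m\<le>K + r. Q m x)"
      unfolding q_Q by (rule sum.mono_neutral_left) (auto simp: Q_zero)
    also have "\<dots> = (\<Sum>m\<le>r. Q m x)"
      by (rule sum.mono_neutral_right) (auto simp: Q_zero)
    finally show ?thesis unfolding Q_def by (simp add: sum_multidegrees_le_by_degree)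
  qed
  then show ?thesis unfolding mpoly_deg_le_def by blast
qed


lemma degree_add_nonneg_lead_coeff:
  fixes A B :: "real poly"
  assumes "0 \<le> lead_coeff A" and "0 \<le> lead_coeff B"
  shows "degree A \<le> degree (A + B) \<and> degree B \<le> degree (A + B) \<and> 0 \<le> lead_coeff (A + B)"
proof (cases "degree A" "degree B" rule: linorder_cases)
  case less
  then have "degree (A + B) = degree B" by (rule degree_add_eq_right)
  moreover have "coeff A (degree B) = 0" using less by (simp add: coeff_eq_0)
  ultimately show ?thesis using less assms by simp
next
  case greater
  then have "degree (A + B) = degree A" by (rule degree_add_eq_left)
  moreover have "coeff B (degree A) = 0" using greater by (simp add: coeff_eq_0)
  ultimately show ?thesis using greater assms by simp
next
  case equal
  show ?thesis
  proof (cases "lead_coeff A + lead_coeff B = 0")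
    case True
    then have "A = 0" "B = 0" using assms by (auto simp: add_nonneg_eq_0_iff)
    then show ?thesis by simp
  next
    case False
    have c: "coeff (A + B) (degree A) = lead_coeff A + lead_coeff B" using equal by simp
    then have "degree A \<le> degree (A + B)" using False by (intro le_degree) simp
    moreover have "degree (A + B) \<le> degree A" using equal degree_add_le[of A "degree A" B] by simp
    ultimately show ?thesis using equal c assms by simp
  qed
qed

lemma degree_lead_coeff_sum_list_squares:
  fixes P :: "'a \<Rightarrow> real poly"
  shows "(\<forall>q\<in>set qs. 2 * degree (P q) \<le> degree (\<Sum>q\<leftarrow>qs. (P q)\<^sup>2))
         \<and> 0 \<le> lead_coeff (\<Sum>q\<leftarrow>qs. (P q)\<^sup>2)"
proof (induction qs)
  case Nil
  then show ?case by simp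
next
  case (Cons q qs)
  have "0 \<le> lead_coeff ((P q)\<^sup>2)" by (simp add: lead_coeff_power)
  with Cons.IH have "degree ((P q)\<^sup>2) \<le> degree ((P q)\<^sup>2 + (\<Sum>q\<leftarrow>qs. (P q)\<^sup>2))
      \<and> degree (\<Sum>q\<leftarrow>qs. (P q)\<^sup>2) \<le> degree ((P q)\<^sup>2 + (\<Sum>q\<leftarrow>qs. (P q)\<^sup>2))
      \<and> 0 \<le> lead_coeff ((P q)\<^sup>2 + (\<Sum>q\<leftarrow>qs. (P q)\<^sup>2))"
    by (intro degree_add_nonneg_lead_coeff) auto
  moreover have "degree ((P q)\<^sup>2) = 2 * degree (P q)"
    by (cases "P q = 0") (simp_all add: degree_power_eq)
  ultimately show ?case
    using Cons.IH by (auto intro: order_trans)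
qed

lemma poly_bounded_on_halfline_imp_degree_0:
  fixes P :: "real poly"
  assumes "\<And>s. s \<ge> 0 \<Longrightarrow> \<bar>poly P s\<bar> \<le> B"
  shows "degree P = 0"
proof (rule ccontr)
  assume "degree P \<noteq> 0"
  obtain a0 p where P: "P = pCons a0 p" by (rule pCons_cases)
  with \<open>degree P \<noteq> 0\<close> have "p \<noteq> 0" by auto
  obtain R where R: "\<And>z. R \<le> norm z \<Longrightarrow> B + 1 \<le> norm (poly P z)"
    using poly_infinity[OF \<open>p \<noteq> 0\<close>, of "B + 1" a0] unfolding P by blast
  have "B + 1 \<le> \<bar>poly P \<bar>R\<bar>\<bar>" using R[of "\<bar>R\<bar>"] by simp
  moreover have "\<bar>poly P \<bar>R\<bar>\<bar> \<le> B" by (rule assms) simp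
  ultimately show False by simp
qed

lemma poly_nonneg_attains_min:
  fixes P :: "real poly"
  assumes "\<And>x. poly P x \<ge> 0"
  obtains a where "\<And>x. poly P a \<le> poly P x"
proof -
  obtain a0 p where P: "P = pCons a0 p" by (rule pCons_cases)
  show ?thesis
  proof (cases "p = 0")
    case True
    then show ?thesis using that by (simp add: P)
  next
    case False
    obtain R where R: "\<And>z. R \<le> norm z \<Longrightarrow> poly P 0 \<le> norm (poly P z)"
      using poly_infinity[OF False, of "poly P 0" a0] unfolding P by blast
    have "\<exists>m\<in>{-\<bar>R\<bar>..\<bar>R\<bar>}. \<forall>y\<in>{-\<bar>R\<bar>..\<bar>R\<bar>}. poly P m \<le> poly P y"
      by (intro continuous_attains_inf) (auto intro: continuous_intros)
    then obtain m where m: "\<And>y. y \<in> {-\<bar>R\<bar>..\<bar>R\<bar>} \<Longrightarrow> poly P m \<le> poly P y"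
      by blast
    have "poly P m \<le> poly P x" for x
    proof (cases "x \<in> {-\<bar>R\<bar>..\<bar>R\<bar>}")
      case True
      then show ?thesis by (rule m)
    next
      case False
      then have "poly P 0 \<le> poly P x" using R[of x] assms[of x] by auto
      moreover have "poly P m \<le> poly P 0" by (rule m) simp
      ultimately show ?thesis by simp
    qed
    then show ?thesis by (rule that)
  qed
qed

lemma poly_eq_min_plus_square_mult:
  fixes P :: "real poly"
  assumes min: "\<And>x. poly P a \<le> poly P x"
  obtains Q where "P = [:poly P a:] + [:-a, 1:]\<^sup>2 * Q" and "\<And>x. poly Q x \<ge> 0"
proof -
  obtain Q1 where Q1: "P - [:poly P a:] = [:-a, 1:] * Q1"
    using poly_eq_0_iff_dvd[of "P - [:poly P a:]" a] by (auto elim: dvdE)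
  have "pderiv P = pderiv (P - [:poly P a:])"
    by (simp add: pderiv_diff pderiv_pCons)
  also have "\<dots> = [:-a, 1:] * pderiv Q1 + Q1 * pderiv [:-a, 1:]"
    unfolding Q1 by (rule pderiv_mult)
  finally have "poly (pderiv P) a = poly Q1 a"
    by (simp add: pderiv_pCons)
  moreover have "poly (pderiv P) a = 0"
    using DERIV_local_min[OF poly_DERIV[of P a], of 1] min by auto
  ultimately have "poly Q1 a = 0" by simp
  then obtain Q where Q: "Q1 = [:-a, 1:] * Q"
    using poly_eq_0_iff_dvd by blast
  have "P = [:poly P a:] + (P - [:poly P a:])" by simp
  also have "\<dots> = [:poly P a:] + [:-a, 1:]\<^sup>2 * Q"
    unfolding Q1 Q by (simp only: power2_eq_square mult.assoc)
  finally have P: "P = [:poly P a:] + [:-a, 1:]\<^sup>2 * Q" .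
  have Q_pos: "poly Q x \<ge> 0" if "x \<noteq> a" for x
  proof -
    have "0 \<le> poly P x - poly P a" using min by simp
    also have "\<dots> = (x - a)\<^sup>2 * poly Q x" by (subst (1) P) (simp add: algebra_simps)
    finally show ?thesis using that by (simp add: zero_le_mult_iff)
  qed
  have "poly Q a \<ge> 0"
  proof (rule tendsto_lowerbound)
    show "(poly Q \<longlongrightarrow> poly Q a) (at a)"
      using poly_isCont[of a Q] unfolding isCont_def .
    show "eventually (\<lambda>y. 0 \<le> poly Q y) (at a)"
      unfolding eventually_at by (intro exI[of _ 1]) (auto intro: Q_pos)
  qed simp
  with Q_pos have "poly Q x \<ge> 0" for x by (cases "x = a") auto
  with P show ?thesis by (rule that)
qed

lemma uni_sos_le_const:
  assumes "0 \<le> c"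
  shows "uni_sos_le d [:c:]"
proof -
  have "[:c:] = [:sqrt c:]\<^sup>2" using assms by (simp add: power2_eq_square)
  then show ?thesis unfolding uni_sos_le_def by (intro exI[of _ "[[:sqrt c:]]"]) simp
qed

lemma uni_sos_le_add_square_mult:
  assumes "0 \<le> c" and "degree L \<le> 1" and "uni_sos_le d Q"
  shows "uni_sos_le (Suc d) ([:c:] + L\<^sup>2 * Q)"
proof -
  obtain qs where qs: "\<forall>q\<in>set qs. degree q \<le> d" "Q = (\<Sum>q\<leftarrow>qs. q\<^sup>2)"
    using assms(3) unfolding uni_sos_le_def by blast
  have L_qs: "L\<^sup>2 * (\<Sum>q\<leftarrow>qs. q\<^sup>2) = (\<Sum>q\<leftarrow>map ((*) L) qs. q\<^sup>2)"
    by (induction qs) (simp_all add: power_mult_distrib distrib_left)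
  have "[:sqrt c:]\<^sup>2 = [:c:]"
    using assms(1) by (simp add: power2_eq_square)
  then have "[:c:] + L\<^sup>2 * Q = (\<Sum>q\<leftarrow>[:sqrt c:] # map ((*) L) qs. q\<^sup>2)"
    by (simp add: qs(2) L_qs)
  moreover have "degree (L * q) \<le> Suc d" if "q \<in> set qs" for q
    using degree_mult_le[of L q] assms(2) qs(1) that by fastforce
  ultimately show ?thesis unfolding uni_sos_le_def
    by (intro exI[of _ "[:sqrt c:] # map ((*) L) qs"]) auto
qed

theorem nonneg_poly_uni_sos_le:
  fixes P :: "real poly"
  assumes "\<And>x. poly P x \<ge> 0" and "degree P \<le> 2 * d"
  shows "uni_sos_le d P"
  using assms
proof (induction d arbitrary: P)
  case 0
  then show ?case
    using uni_sos_le_const[of "coeff P 0"] by (metis degree_0_id le_zero_eq mult_0_right poly_0_coeff_0)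
next
  case (Suc d)
  obtain a where min: "\<And>x. poly P a \<le> poly P x"
    using poly_nonneg_attains_min Suc.prems(1) by blast
  obtain Q where P: "P = [:poly P a:] + [:-a, 1:]\<^sup>2 * Q" and Q: "\<And>x. poly Q x \<ge> 0"
    using poly_eq_min_plus_square_mult[OF min] by blast
  have "degree Q \<le> 2 * d"
  proof (cases "Q = 0")
    case False
    then have "degree ([:-a, 1:]\<^sup>2 * Q) = 2 + degree Q"
      by (simp add: degree_mult_eq degree_power_eq)
    then have "degree P = 2 + degree Q"
      by (subst P, subst degree_add_eq_right) simp_all
    then show ?thesis using Suc.prems(2) by simp
  qed simp
  then have "uni_sos_le d Q" using Q Suc.IH by blast
  then have "uni_sos_le (Suc d) ([:poly P a:] + [:-a, 1:]\<^sup>2 * Q)"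
    using Suc.prems(1) by (intro uni_sos_le_add_square_mult) simp_all
  then show ?case using P by simp
qed

definition tangent_remainder :: "real poly \<Rightarrow> real \<Rightarrow> real poly" where
  "tangent_remainder u a = u - [:poly u a:] - smult (poly (pderiv u) a) [:-a, 1:]"

lemma poly_tangent_remainder:
  "poly (tangent_remainder u a) t = poly u t - poly u a - poly (pderiv u) a * (t - a)"
  unfolding tangent_remainder_def by (simp add: algebra_simps)

lemma uni_sos_le_tangent_remainder:
  fixes u :: "real poly"
  assumes "convex_on UNIV (poly u)" and "degree u \<le> 2 * d"
  shows "uni_sos_le d (tangent_remainder u a)"
  unfolding tangent_remainder_def
proof (rule nonneg_poly_uni_sos_le)
  fix x
  have "poly (pderiv u) a * (x - a) \<le> poly u x - poly u a"
    by (rule convex_on_imp_above_tangent[OF assms(1)]) auto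
  then show "0 \<le> poly (u - [:poly u a:] - smult (poly (pderiv u) a) [:-a, 1:]) x"
    by (simp add: algebra_simps)
next
  have "degree (smult (poly (pderiv u) a) [:-a, 1:]) \<le> 2 * d"
  proof (cases "d = 0")
    case True
    then have "pderiv u = 0" using assms(2) by (simp add: pderiv_eq_0_iff)
    then show ?thesis by simp
  qed (simp add: order_trans[OF degree_smult_le])
  then show "degree (u - [:poly u a:] - smult (poly (pderiv u) a) [:-a, 1:]) \<le> 2 * d"
    using assms(2) by (intro degree_diff_le) auto
qed

lemma sos_nonneg: "sos F \<Longrightarrow> 0 \<le> F z"
  unfolding sos_def sos_le_def by (auto intro!: sum_list_nonneg)

lemma sos_le_join_vec_left:
  assumes "sos_le k F"
  shows "sos_le k (\<lambda>x. F (join_vec x y))"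
proof -
  obtain qs where "\<forall>q\<in>set qs. mpoly_deg_le k q" and "F = (\<lambda>z. \<Sum>q\<leftarrow>qs. (q z)\<^sup>2)"
    using assms unfolding sos_le_def by blast
  then show ?thesis unfolding sos_le_def
    by (intro exI[of _ "map (\<lambda>q x. q (join_vec x y)) qs"])
      (auto intro: mpoly_deg_le_join_vec_left simp: o_def)
qed

lemma sos_le_add_const:
  assumes "0 \<le> c" and "sos_le k F"
  shows "sos_le k (\<lambda>x. c + F x)"
proof -
  obtain qs where "\<forall>q\<in>set qs. mpoly_deg_le k q" and "F = (\<lambda>z. \<Sum>q\<leftarrow>qs. (q z)\<^sup>2)"
    using assms(2) unfolding sos_le_def by blast
  then show ?thesis unfolding sos_le_def using assms(1)
    by (intro exI[of _ "(\<lambda>x. sqrt c) # qs"]) (auto intro: mpoly_deg_le_const)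
qed

lemma sos_le_div2_if_ray_degree_le:
  assumes "sos_le K \<sigma>" and "ray_degree_le k \<sigma>"
  shows "sos_le (k div 2) \<sigma>"
proof -
  obtain qs where qs: "\<forall>q\<in>set qs. mpoly_deg_le K q" and \<sigma>: "\<sigma> = (\<lambda>x. \<Sum>q\<leftarrow>qs. (q x)\<^sup>2)"
    using assms(1) unfolding sos_le_def by blast
  have "ray_degree_le (k div 2) q" if q: "q \<in> set qs" for q
    unfolding ray_degree_le_def
  proof
    fix x
    have "\<forall>q\<in>set qs. \<exists>P. \<forall>t. q (t *\<^sub>R x) = poly P t"
      using qs ray_degree_le_if_mpoly_deg_le unfolding ray_degree_le_def by blast
    then obtain P where P: "\<And>q t. q \<in> set qs \<Longrightarrow> q (t *\<^sub>R x) = poly (P q) t"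
      by metis
    obtain G where G: "degree G \<le> k" "\<And>t. \<sigma> (t *\<^sub>R x) = poly G t"
      using assms(2) unfolding ray_degree_le_def by blast
    have "poly (\<Sum>q\<leftarrow>qs. (P q)\<^sup>2) t = poly G t" for t
    proof -
      have "poly (\<Sum>q\<leftarrow>qs. (P q)\<^sup>2) t = (\<Sum>q\<leftarrow>qs. (poly (P q) t)\<^sup>2)"
        by (induction qs) simp_all
      also have "\<dots> = \<sigma> (t *\<^sub>R x)"
        unfolding \<sigma> by (intro arg_cong[where f = sum_list] map_cong) (simp_all add: P)
      finally show ?thesis by (simp add: G(2))
    qed
    then have "(\<Sum>q\<leftarrow>qs. (P q)\<^sup>2) = G"
      by (simp add: poly_eq_poly_eq_iff[symmetric] fun_eq_iff)
    then have "2 * degree (P q) \<le> k"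
      using degree_lead_coeff_sum_list_squares[of qs P] q G(1) by auto
    then have "degree (P q) \<le> k div 2" by presburger
    then show "\<exists>R. degree R \<le> k div 2 \<and> (\<forall>t. q (t *\<^sub>R x) = poly R t)"
      using P[OF q] by auto
  qed
  then have "\<forall>q\<in>set qs. mpoly_deg_le (k div 2) q"
    using qs mpoly_deg_le_if_ray_degree_le by blast
  then show ?thesis unfolding sos_le_def \<sigma> by blast
qed

lemma sos_le_add_tangent_remainder:
  fixes p :: "real ^ 'i::finite \<Rightarrow> real"
  assumes "sos F" and F: "\<And>x. F (join_vec x y) = p x - p y - g \<bullet> (x - y)"
    and "mpoly_deg_le (2 * r) p" and "0 \<le> c"
  shows "sos_le r (\<lambda>x. c + F (join_vec x y))"
proof -
  obtain K where "sos_le K F" using assms(1) unfolding sos_def by blast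
  then have "sos_le K (\<lambda>x. c + F (join_vec x y))"
    using assms(4) by (intro sos_le_add_const sos_le_join_vec_left)
  moreover have "ray_degree_le (2 * r + 1) (\<lambda>x. c + F (join_vec x y))"
  proof -
    have "ray_degree_le (2 * r + 1) p"
      using ray_degree_le_mono[OF ray_degree_le_if_mpoly_deg_le[OF assms(3)]] by simp
    moreover have "ray_degree_le (2 * r + 1) (\<lambda>x. (c - p y + g \<bullet> y) + (- g) \<bullet> x)"
      by (rule ray_degree_le_mono[OF ray_degree_le_affine]) simp
    ultimately have "ray_degree_le (2 * r + 1) (\<lambda>x. p x + ((c - p y + g \<bullet> y) + (- g) \<bullet> x))"
      by (rule ray_degree_le_add)
    also have "(\<lambda>x. p x + ((c - p y + g \<bullet> y) + (- g) \<bullet> x)) = (\<lambda>x. c + F (join_vec x y))"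
      by (simp add: F inner_diff_right fun_eq_iff)
    finally show ?thesis .
  qed
  ultimately show ?thesis using sos_le_div2_if_ray_degree_le by fastforce
qed

lemma convex_on_if_above_tangents:
  fixes f :: "'a::real_inner \<Rightarrow> real"
  assumes "\<And>x y. f y + g y \<bullet> (x - y) \<le> f x"
  shows "convex_on UNIV f"
proof (rule convex_onI)
  fix t :: real and x y :: 'a
  assume t: "0 < t" "t < 1"
  define z where "z = (1 - t) *\<^sub>R x + t *\<^sub>R y"
  have "(1 - t) * (f z + g z \<bullet> (x - z)) + t * (f z + g z \<bullet> (y - z))
      = f z + g z \<bullet> ((1 - t) *\<^sub>R (x - z) + t *\<^sub>R (y - z))"
    by (simp add: inner_add_right algebra_simps)
  also have "(1 - t) *\<^sub>R (x - z) + t *\<^sub>R (y - z) = 0"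
    unfolding z_def by (simp add: algebra_simps)
  finally have "f z = (1 - t) * (f z + g z \<bullet> (x - z)) + t * (f z + g z \<bullet> (y - z))"
    by simp
  also have "\<dots> \<le> (1 - t) * f x + t * f y"
    using t assms[of z x] assms[of z y] by (intro add_mono mult_left_mono) auto
  finally show "f ((1 - t) *\<^sub>R x + t *\<^sub>R y) \<le> (1 - t) * f x + t * f y"
    unfolding z_def .
qed simp

text \<open>By convexity, f is bounded on every half-line parallel to the ray, and a polynomial
  bounded on a half-line is constant.\<close>

lemma convex_mpoly_constant_along_bounded_ray:
  fixes f :: "real ^ 'i::finite \<Rightarrow> real"
  assumes "mpoly_deg_le k f" and cvx: "convex_on UNIV f" and nonneg: "\<And>x. 0 \<le> f x"
    and ray: "\<And>t. 0 \<le> t \<Longrightarrow> f (t *\<^sub>R v) \<le> f 0"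
  shows "f (x + t *\<^sub>R v) = f x"
proof -
  obtain P where P: "\<And>t. f (x + t *\<^sub>R v) = poly P t"
    using mpoly_deg_le_on_line[OF assms(1)] by metis
  have "\<bar>poly P s\<bar> \<le> (f (2 *\<^sub>R x) + f 0) / 2" if "0 \<le> s" for s
  proof -
    have "f (x + s *\<^sub>R v) = f ((1 - 1/2) *\<^sub>R (2 *\<^sub>R x) + (1/2) *\<^sub>R ((2 * s) *\<^sub>R v))"
      by (simp add: algebra_simps)
    also have "\<dots> \<le> (1 - 1/2) * f (2 *\<^sub>R x) + (1/2) * f ((2 * s) *\<^sub>R v)"
      by (rule convex_onD[OF cvx]) auto
    also have "\<dots> \<le> (f (2 *\<^sub>R x) + f 0) / 2"
      using ray[of "2 * s"] that by simp
    finally show ?thesis using nonneg[of "x + s *\<^sub>R v"] P[of s] by simp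
  qed
  then have "degree P = 0" by (rule poly_bounded_on_halfline_imp_degree_0)
  then have "poly P t = poly P 0" by (metis degree_0_id poly_const_conv)
  then show ?thesis using P[of t] P[of 0] by simp
qed

lemma unbounded_sublevel_set_imp_recession_direction:
  fixes f :: "'a::euclidean_space \<Rightarrow> real"
  assumes cvx: "convex_on UNIV f" and cont: "continuous_on UNIV f"
    and "closed M" and cone: "\<And>c m. m \<in> M \<Longrightarrow> c *\<^sub>R m \<in> M"
    and unbounded: "\<not> bounded {m \<in> M. f m \<le> f 0}"
  obtains v where "v \<in> M" and "norm v = 1" and "\<And>t. 0 \<le> t \<Longrightarrow> f (t *\<^sub>R v) \<le> f 0"
proof -
  have "\<forall>n::nat. \<exists>y\<in>{m \<in> M. f m \<le> f 0}. real n < norm y"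
    using unbounded unfolding bounded_iff by (meson not_le)
  then obtain Y where Y: "\<And>n. Y n \<in> M" "\<And>n. f (Y n) \<le> f 0" "\<And>n. real n < norm (Y n)"
    by (metis (mono_tags, lifting) mem_Collect_eq)
  define D where "D n = (1 / norm (Y n)) *\<^sub>R Y n" for n
  have norm_Y: "norm (Y n) > 0" for n
    using Y(3)[of n] by linarith
  have "D n \<in> sphere 0 1" for n
    unfolding D_def using norm_Y[of n] by simp
  then obtain v r where v: "v \<in> sphere 0 1" and r: "strict_mono r" "(D \<circ> r) \<longlonglongrightarrow> v"
    using compact_imp_seq_compact[OF compact_sphere[of 0 1]] unfolding seq_compact_def by metis
  have "v \<in> M"
    using closed_sequentially[OF \<open>closed M\<close> _ r(2)] cone Y(1) by (auto simp: D_def)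
  moreover have "f (t *\<^sub>R v) \<le> f 0" if t: "0 \<le> t" for t
  proof (rule tendsto_upperbound)
    show "(\<lambda>n. f (t *\<^sub>R (D \<circ> r) n)) \<longlonglongrightarrow> f (t *\<^sub>R v)"
      by (intro continuous_on_tendsto_compose[OF cont] tendsto_intros r(2)) auto
    show "eventually (\<lambda>n. f (t *\<^sub>R (D \<circ> r) n) \<le> f 0) sequentially"
    proof (rule eventually_sequentiallyI[of "nat \<lceil>t\<rceil>"])
      fix n assume n: "nat \<lceil>t\<rceil> \<le> n"
      define \<theta> where "\<theta> = t / norm (Y (r n))"
      have "real n \<le> real (r n)" using seq_suble[OF r(1)] by simp
      then have "t < norm (Y (r n))" using Y(3)[of "r n"] n by linarith
      then have \<theta>: "0 \<le> \<theta>" "\<theta> \<le> 1"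
        unfolding \<theta>_def using t by (auto simp: divide_le_eq_1)
      have "f (t *\<^sub>R (D \<circ> r) n) = f ((1 - \<theta>) *\<^sub>R 0 + \<theta> *\<^sub>R Y (r n))"
        unfolding D_def \<theta>_def by simp
      also have "\<dots> \<le> (1 - \<theta>) * f 0 + \<theta> * f (Y (r n))"
        using convex_onD[OF cvx, of \<theta> 0 "Y (r n)"] \<theta> by simp
      also have "\<dots> \<le> (1 - \<theta>) * f 0 + \<theta> * f 0"
        using Y(2) \<theta> by (intro add_left_mono mult_left_mono) auto
      finally show "f (t *\<^sub>R (D \<circ> r) n) \<le> f 0" by (simp add: algebra_simps)
    qed
  qed simp
  ultimately show ?thesis using that v by simp
qed

text \<open>Modulo its lineality space L, the directions along which f is constant, a nonnegative
  convex polynomial has bounded sublevel sets: by the previous two lemmas an unbounded one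
  would contain a unit recession direction lying both in L and in its orthogonal
  complement.\<close>

theorem convex_nonneg_mpoly_attains_min:
  fixes f :: "real ^ 'i::finite \<Rightarrow> real"
  assumes "mpoly_deg_le k f" and cvx: "convex_on UNIV f" and cont: "continuous_on UNIV f"
    and nonneg: "\<And>x. 0 \<le> f x"
  obtains y where "\<And>x. f y \<le> f x"
proof -
  define L where "L = {v. \<forall>x t. f (x + t *\<^sub>R v) = f x}"
  define M where "M = {m. \<forall>v\<in>L. orthogonal v m}"
  define S where "S = {m \<in> M. f m \<le> f 0}"
  have "subspace L"
    unfolding subspace_def L_def by (simp add: scaleR_add_right add.assoc[symmetric])
  then have "span L = L" by (simp add: span_eq_iff)
  have "subspace M" unfolding M_def by (rule subspace_orthogonal_to_vectors)
  then have "closed M" by (rule closed_subspace)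
  have f_M: "\<exists>m\<in>M. f x = f m" for x
  proof -
    obtain l m where "l \<in> span L" "\<And>w. w \<in> span L \<Longrightarrow> orthogonal m w" "x = l + m"
      using orthogonal_subspace_decomp_exists[of L x] by blast
    then have "l \<in> L" "m \<in> M" "x = m + 1 *\<^sub>R l"
      unfolding \<open>span L = L\<close> by (auto simp: M_def orthogonal_commute)
    moreover from \<open>l \<in> L\<close> have "f (m + 1 *\<^sub>R l) = f m"
      unfolding L_def by blast
    ultimately show ?thesis by auto
  qed
  have "bounded S"
  proof (rule ccontr)
    assume "\<not> bounded S"
    then obtain v where v: "v \<in> M" "norm v = 1" "\<And>t. 0 \<le> t \<Longrightarrow> f (t *\<^sub>R v) \<le> f 0"
      using unbounded_sublevel_set_imp_recession_direction[OF cvx cont \<open>closed M\<close>]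
        \<open>subspace M\<close> unfolding S_def by (metis subspace_scale)
    then have "v \<in> L"
      unfolding L_def using convex_mpoly_constant_along_bounded_ray[OF assms(1) cvx nonneg] by blast
    with v show False unfolding M_def by (auto simp: orthogonal_self)
  qed
  moreover have "closed S"
    unfolding S_def using \<open>closed M\<close> closed_Collect_le[OF cont continuous_on_const]
    by (simp add: Collect_conj_eq closed_Int)
  moreover have "0 \<in> S" unfolding S_def M_def by (simp add: orthogonal_clauses)
  ultimately obtain y where y: "\<And>z. z \<in> S \<Longrightarrow> f y \<le> f z"
    using continuous_attains_inf[of S f] continuous_on_subset[OF cont]
    by (metis compact_eq_bounded_closed empty_iff subset_UNIV)
  have "f y \<le> f x" for x
  proof -
    obtain m where "m \<in> M" "f x = f m" using f_M by blast
    then show ?thesis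
      using y[of m] y[of 0] \<open>0 \<in> S\<close> unfolding S_def by (cases "f m \<le> f 0") auto
  qed
  then show ?thesis by (rule that)
qed

lemma sos_convex_attains_min:
  fixes f :: "real ^ 'i::finite \<Rightarrow> real"
  assumes "sos_convex f" and "\<And>x. 0 \<le> f x"
  obtains y where "\<And>x. f y \<le> f x"
proof -
  obtain k g F where "mpoly_deg_le k f" and g: "\<And>y. (f has_derivative (\<lambda>h. g y \<bullet> h)) (at y)"
    and F: "sos F" "\<And>x y. F (join_vec x y) = f x - f y - g y \<bullet> (x - y)"
    using assms(1) unfolding sos_convex_def mpoly_def by blast
  moreover have "f y + g y \<bullet> (x - y) \<le> f x" for x y
    using sos_nonneg[OF F(1), of "join_vec x y"] F(2)[of x y] by simp
  then have "convex_on UNIV f" by (rule convex_on_if_above_tangents)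
  moreover have "continuous_on UNIV f"
    using g by (meson continuous_at_imp_continuous_on has_derivative_continuous)
  ultimately show ?thesis using convex_nonneg_mpoly_attains_min assms(2) that by blast
qed

lemma has_derivative_sum_poly_coordinates:
  fixes u :: "'i::finite \<Rightarrow> real poly"
  shows "((\<lambda>x. \<Sum>j\<in>UNIV. poly (u j) (x $ j)) has_derivative
           (\<lambda>h. \<Sum>j\<in>UNIV. poly (pderiv (u j)) (y $ j) * h $ j)) (at y)"
proof (rule has_derivative_sum)
  fix j
  have "(poly (u j) has_derivative (\<lambda>h. poly (pderiv (u j)) (y $ j) * h)) (at (y $ j))"
    using poly_DERIV[of "u j" "y $ j"] unfolding has_field_derivative_def by simp
  with bounded_linear_imp_has_derivative[OF bounded_linear_vec_nth]
  show "((\<lambda>x. poly (u j) (x $ j)) has_derivative (\<lambda>h. poly (pderiv (u j)) (y $ j) * h $ j)) (at y)"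
    by (rule has_derivative_compose)
qed

theorem lemma4:
  fixes f p :: "real ^ 'n::finite \<Rightarrow> real"
    and u :: "'n \<Rightarrow> real poly"
    and d :: "'n \<Rightarrow> nat"
    and r :: nat
  assumes "sos_convex f"
    and "\<And>j. degree (u j) \<le> 2 * d j"
    and "\<And>j. convex_on UNIV (poly (u j))"
    and "sos_convex p"
    and "mpoly_deg_le (2 * r) p"
    and "\<And>x. f x = (\<Sum>j\<in>UNIV. poly (u j) (x $ j)) + p x"
    and "\<And>x. f x \<ge> 0"
  shows "\<exists>\<sigma> \<sigma>s. sos_le r \<sigma> \<and> (\<forall>j. uni_sos_le (d j) (\<sigma>s j)) \<and>
           (\<forall>x. f x = \<sigma> x + (\<Sum>j\<in>UNIV. poly (\<sigma>s j) (x $ j)))"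
proof -
  obtain y where min: "\<And>x. f y \<le> f x"
    using sos_convex_attains_min assms(1,7) by blast
  obtain g F where g: "(p has_derivative (\<lambda>h. g \<bullet> h)) (at y)"
    and F: "sos F" "\<And>x. F (join_vec x y) = p x - p y - g \<bullet> (x - y)"
    using assms(4) unfolding sos_convex_def by blast
  define \<sigma> where "\<sigma> x = f y + F (join_vec x y)" for x
  have "f = (\<lambda>x. (\<Sum>j\<in>UNIV. poly (u j) (x $ j)) + p x)"
    using assms(6) by blast
  then have "(f has_derivative (\<lambda>h. (\<Sum>j\<in>UNIV. poly (pderiv (u j)) (y $ j) * h $ j) + g \<bullet> h)) (at y)"
    using has_derivative_add[OF has_derivative_sum_poly_coordinates g] by simp
  then have grad: "(\<Sum>j\<in>UNIV. poly (pderiv (u j)) (y $ j) * h $ j) + g \<bullet> h = 0" for h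
    using has_derivative_local_min min by (metis (mono_tags) always_eventually)
  have "uni_sos_le (d j) (tangent_remainder (u j) (y $ j))" for j
    using assms(3,2) by (rule uni_sos_le_tangent_remainder)
  moreover have "sos_le r \<sigma>"
    unfolding \<sigma>_def using F assms(5,7) by (rule sos_le_add_tangent_remainder)
  moreover have "f x = \<sigma> x + (\<Sum>j\<in>UNIV. poly (tangent_remainder (u j) (y $ j)) (x $ j))" for x
  proof -
    have "(\<Sum>j\<in>UNIV. poly (tangent_remainder (u j) (y $ j)) (x $ j))
        = (\<Sum>j\<in>UNIV. poly (u j) (x $ j)) - (\<Sum>j\<in>UNIV. poly (u j) (y $ j))
          - (\<Sum>j\<in>UNIV. poly (pderiv (u j)) (y $ j) * (x - y) $ j)"
      by (simp only: poly_tangent_remainder vector_minus_component sum_subtractf)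
    then show ?thesis
      using grad[of "x - y"] assms(6)[of x] assms(6)[of y] by (simp add: \<sigma>_def F(2))
  qed
  ultimately show ?thesis
    by (intro exI[of _ \<sigma>] exI[of _ "\<lambda>j. tangent_remainder (u j) (y $ j)"]) simp
qed

end
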